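(* Consider the equations $$M=m\,\frac{\int_{\mathcal B((\tilde x,y),R)}\lambda e^{-\lambda r}\,dx\,dr}{\int_{D\setminus\mathcal B((\tilde x,y),R)}\lambda e^{-\lambda r}\,dx\,dr}\qquad(\ast)$$ and $$\frac{dmg}{2\lambda}+mg\,\frac{\int_{D\setminus\mathcal B((\tilde x,y),R)}r\lambda e^{-\lambda r}\,dx\,dr}{\int_{D\setminus\mathcal B((\tilde x,y),R)}\lambda e^{-\lambda r}\,dx\,dr}+Mgy=E\qquad(\ast\ast)$$ in the unknowns $y\ge R$ and $\lambda>0$. (i) There exists a unique $\lambda_*>0$ such that $(\ast\ast)$ holds with $y=R$. (ii) Suppose that $$M<m\,\frac{\int_{\mathcal B((\tilde x,R),R)}\lambda_* e^{-\lambda_* r}\,dx\,dr}{\int_{D\setminus\mathcal B((\tilde x,R),R)}\lambda_* e^{-\lambda_* r}\,dx\,dr}.$$ Then $(\ast)$–$(\ast\ast)$ have a unique solution $(y_A,\lambda_A)$, and $R<y_A<E/(Mg)$.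
   Context: Fix an integer $d\ge 2$, a bounded domain $D_b\subset\mathbb R^{d-1}$ with smooth boundary, and $R>0$. Assume that $D_b$ satisfies the inner ball condition with radius $R$: for every $x\in\partial D_b$ there is a unique open $(d-1)$-dimensional ball of radius $R$ contained in $D_b$ whose boundary is tangent to $\partial D_b$ at $x$, and $x$ is the only point of intersection of that ball's boundary with $\partial D_b$. Let $D=D_b\times[0,\infty)\subset\mathbb R^d$, and assume a closed ball of radius $R$ fits in the interior of $D$. Points of $\mathbb R^d$ are written $(x,y)$ with $x\in\mathbb R^{d-1}$ and $y\in\mathbb R$. $\mathcal B(z,r)$ denotes the open ball with center $z$ and radius $r$. Let $D_b'=\{x\in D_b:\mathcal B((x,y),R)\subset D\text{ for all }y>R\}$. In integrals of the form $\int_{D\setminus\mathcal B((\tilde x,y),R)}(\cdot)\,dx\,dr$ (and similarly over $\mathcal B((\tilde x,y),R)$): - $\tilde x$ is an arbitrary point of $D_b'$, and the value of the integral does not depend on this choice; - $dx$ is Lebesgue measure on $\mathbb R^{d-1}$ and $dr$ is Lebesgue measure in the vertical coordinate. Fix $m>0$, $M>0$, $g>0$ and $E>MgR$. *)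

theory Defs
  imports "HOL-Analysis.Analysis"
begin

fun Ck_on :: "nat \<Rightarrow> 'a::euclidean_space set \<Rightarrow> ('a \<Rightarrow> real) \<Rightarrow> bool" where
  "Ck_on 0 U f = continuous_on U f"
| "Ck_on (Suc k) U f = (f differentiable_on U \<and>
      (\<forall>b\<in>Basis. Ck_on k U (\<lambda>x. frechet_derivative f (at x) b)))"

definition smooth_on :: "'a::euclidean_space set \<Rightarrow> ('a \<Rightarrow> real) \<Rightarrow> bool" where
  "smooth_on U f = (\<forall>k. Ck_on k U f)"

definition smooth_boundary :: "'a::euclidean_space set \<Rightarrow> bool" where
  "smooth_boundary S = (\<forall>p\<in>frontier S. \<exists>\<epsilon>>0. \<exists>\<phi>. smooth_on (ball p \<epsilon>) \<phi> \<and>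
      frechet_derivative \<phi> (at p) \<noteq> (\<lambda>v. 0) \<and>
      S \<inter> ball p \<epsilon> = {z\<in>ball p \<epsilon>. \<phi> z < 0})"

definition smooth_bounded_domain :: "'a::euclidean_space set \<Rightarrow> bool" where
  "smooth_bounded_domain S = (open S \<and> connected S \<and> S \<noteq> {} \<and> bounded S \<and> smooth_boundary S)"

definition inner_ball_condition :: "'a::euclidean_space set \<Rightarrow> real \<Rightarrow> bool" where
  "inner_ball_condition S R = (\<forall>x\<in>frontier S.
      (\<exists>!c. ball c R \<subseteq> S \<and> x \<in> sphere c R) \<and>
      (\<forall>c. ball c R \<subseteq> S \<and> x \<in> sphere c R \<longrightarrow> sphere c R \<inter> frontier S = {x}))"

definition cyl :: "'a::euclidean_space set \<Rightarrow> ('a \<times> real) set" where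
  "cyl Db = Db \<times> {0..}"

definition Db_prime :: "'a::euclidean_space set \<Rightarrow> real \<Rightarrow> 'a set" where
  "Db_prime Db R = {x\<in>Db. \<forall>y>R. ball (x, y) R \<subseteq> cyl Db}"

text \<open>The integrals appearing in the equations (Lebesgue measure on R^{d-1} \<times> R;
  the second coordinate is the vertical coordinate r).\<close>
definition int_in :: "'a::euclidean_space set \<Rightarrow> real \<Rightarrow> 'a \<Rightarrow> real \<Rightarrow> real \<Rightarrow> real" where
  "int_in Db R xt y l = (LINT z : ball (xt, y) R | lborel. l * exp (- l * snd z))"

definition int_out :: "'a::euclidean_space set \<Rightarrow> real \<Rightarrow> 'a \<Rightarrow> real \<Rightarrow> real \<Rightarrow> real" where
  "int_out Db R xt y l = (LINT z : cyl Db - ball (xt, y) R | lborel. l * exp (- l * snd z))"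

definition rint_out :: "'a::euclidean_space set \<Rightarrow> real \<Rightarrow> 'a \<Rightarrow> real \<Rightarrow> real \<Rightarrow> real" where
  "rint_out Db R xt y l = (LINT z : cyl Db - ball (xt, y) R | lborel. snd z * (l * exp (- l * snd z)))"

definition eq_star :: "'a::euclidean_space set \<Rightarrow> real \<Rightarrow> 'a \<Rightarrow> real \<Rightarrow> real \<Rightarrow> real \<Rightarrow> real \<Rightarrow> bool" where
  "eq_star Db R xt m M y l = (M = m * (int_in Db R xt y l / int_out Db R xt y l))"

definition eq_2star :: "'a::euclidean_space set \<Rightarrow> real \<Rightarrow> 'a \<Rightarrow> real \<Rightarrow> real \<Rightarrow> real \<Rightarrow> real \<Rightarrow> real \<Rightarrow> real \<Rightarrow> bool" where
  "eq_2star Db R xt m M g E y l =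
     (real (DIM('a) + 1) * m * g / (2 * l)
      + m * g * (rint_out Db R xt y l / int_out Db R xt y l) + M * g * y = E)"

end

theory Submission
  imports Defs "HOL-Probability.Distributions"
begin

(*
  By slicing horizontally, every integral reduces to a one-dimensional Laplace-type integral
  against the area profile of the ball's horizontal sections; moving the ball to height y
  multiplies the inner integrals by e^(-\<lambda>y).

  For fixed y the left-hand side of (\<ast>\<ast>) is strictly decreasing in \<lambda>: the mean height under the
  outer density \<lambda>e^(-\<lambda>r) decreases in \<lambda> by Chebyshev's correlation inequality, because the
  exponential kernel is totally positive. It tends to infinity as \<lambda> \<rightarrow> 0 and to Mgy < E as
  \<lambda> \<rightarrow> \<infinity>, so (\<ast>\<ast>) has a unique root \<lambda>(y), continuous in y; at y = R this is (i).

  Equation (\<ast>) says that the inner mass e^(-\<lambda>y) P(\<lambda>) equals AM/(m+M). The hypothesis of (ii) puts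
  the inner mass above this value at y = R, and near y = E/(Mg) the root \<lambda>(y) is large and the
  inner mass small, so the intermediate value theorem gives a solution. Along (\<ast>) the height
  drops out of (\<ast>\<ast>), which becomes an equation in \<lambda> alone; it has at most one root because
  \<lambda>(R + Q/P) increases, again by Chebyshev's inequality, now using that the rescaled section
  profile is totally positive of order two. The bounds R < y < E/(Mg) come from the hypothesis
  at y = R and from the positive kinetic term of (\<ast>\<ast>).
*)

lemma integrable_continuous_vanishing_outside:
  fixes h :: "real \<Rightarrow> real"
  assumes "continuous_on UNIV h" "\<And>s. s \<notin> {c..e} \<Longrightarrow> h s = 0"
  shows "integrable lborel h"
proof -
  have "integrable lborel (\<lambda>s. indicator {c..e} s *\<^sub>R h s)"
    by (rule borel_integrable_compact) (auto intro: continuous_on_subset[OF assms(1)])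
  moreover have "(\<lambda>s. indicator {c..e} s *\<^sub>R h s) = h"
    using assms(2) by (auto simp: fun_eq_iff split: split_indicator)
  ultimately show ?thesis by simp
qed

lemma integral_pos_of_lower_bound_on_interval:
  fixes f :: "real \<Rightarrow> real"
  assumes "integrable lborel f" "\<And>x. f x \<ge> 0" "\<And>x. x \<in> {u..v} \<Longrightarrow> f x \<ge> c" "c > 0" "u < v"
  shows "(\<integral>x. f x \<partial>lborel) > 0"
proof -
  have "(\<integral>x. indicator {u..v} x * c \<partial>lborel) \<le> (\<integral>x. f x \<partial>lborel)"
    by (rule integral_mono) (use assms in \<open>auto split: split_indicator\<close>)
  moreover have "(\<integral>x. indicator {u..v} x * c \<partial>lborel) = (v - u) * c"
    using assms by simp
  moreover have "(v - u) * c > 0" using assms by simp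
  ultimately show ?thesis by linarith
qed

lemma integral_le_0:
  fixes f :: "real \<Rightarrow> real"
  assumes "integrable lborel f" "\<And>x. f x \<le> 0"
  shows "(\<integral>x. f x \<partial>lborel) \<le> 0"
  using integral_mono[OF assms(1) integrable_zero assms(2)] by simp

text \<open>Chebyshev's correlation inequality, obtained by integrating the hypothesis over \<open>x\<close> and \<open>z\<close>.\<close>
lemma chebyshev_mean_le:
  fixes p q X :: "real \<Rightarrow> real"
  assumes p: "integrable lborel p" and q: "integrable lborel q"
    and Xp: "integrable lborel (\<lambda>x. X x * p x)" and Xq: "integrable lborel (\<lambda>x. X x * q x)"
    and opposite: "\<And>x z. (X x - X z) * (q x * p z - p x * q z) \<le> 0"
    and "(\<integral>x. p x \<partial>lborel) > 0" "(\<integral>x. q x \<partial>lborel) > 0"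
  shows "(\<integral>x. X x * q x \<partial>lborel) / (\<integral>x. q x \<partial>lborel)
       \<le> (\<integral>x. X x * p x \<partial>lborel) / (\<integral>x. p x \<partial>lborel)"
proof -
  define Ip Iq IXp IXq where "Ip = (\<integral>x. p x \<partial>lborel)" and "Iq = (\<integral>x. q x \<partial>lborel)"
    and "IXp = (\<integral>x. X x * p x \<partial>lborel)" and "IXq = (\<integral>x. X x * q x \<partial>lborel)"
  have lin: "has_bochner_integral lborel (\<lambda>z. a * p z + (b * q z + (c * (X z * p z) + e * (X z * q z))))
      (a * Ip + (b * Iq + (c * IXp + e * IXq)))" for a b c e
    unfolding Ip_def Iq_def IXp_def IXq_def
    by (intro has_bochner_integral_add has_bochner_integral_mult_right
        has_bochner_integral_integrable p q Xp Xq)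
  have inner: "X x * q x * Ip + (- X x * p x * Iq + (- q x * IXp + p x * IXq)) \<le> 0" for x
  proof -
    have "(\<integral>z. X x * q x * p z + (- X x * p x * q z + (- q x * (X z * p z) + p x * (X z * q z))) \<partial>lborel) \<le> 0"
    proof (rule integral_le_0[OF integrable.intros[OF lin]])
      fix z
      show "X x * q x * p z + (- X x * p x * q z + (- q x * (X z * p z) + p x * (X z * q z))) \<le> 0"
        using opposite[of x z] by (simp add: algebra_simps)
    qed
    then show ?thesis by (simp only: has_bochner_integral_integral_eq[OF lin])
  qed
  have "(\<integral>x. IXq * p x + (- IXp * q x + (- Iq * (X x * p x) + Ip * (X x * q x))) \<partial>lborel) \<le> 0"
    using inner by (intro integral_le_0 integrable.intros[OF lin]) (simp add: algebra_simps)
  then have "IXq * Ip + (- IXp * Iq + (- Iq * IXp + Ip * IXq)) \<le> 0"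
    by (simp only: has_bochner_integral_integral_eq[OF lin])
  then show ?thesis
    using assms(6,7) unfolding Ip_def Iq_def IXp_def IXq_def by (simp add: divide_simps algebra_simps)
qed

lemma exp_kernel_cross_difference_nonpos:
  fixes l1 l2 x z :: real
  assumes "l1 \<le> l2"
  shows "(x - z) * (exp (-l2*x) * exp (-l1*z) - exp (-l1*x) * exp (-l2*z)) \<le> 0"
proof (cases "z \<le> x")
  case True
  then have "(l2 - l1) * (x - z) \<ge> 0" using assms by simp
  then have "exp (-l2*x) * exp (-l1*z) \<le> exp (-l1*x) * exp (-l2*z)"
    by (simp add: mult_exp_exp algebra_simps)
  then show ?thesis using True by (intro mult_nonneg_nonpos) auto
next
  case False
  then have "(l2 - l1) * (z - x) \<ge> 0" using assms by simp
  then have "exp (-l1*x) * exp (-l2*z) \<le> exp (-l2*x) * exp (-l1*z)"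
    by (simp add: mult_exp_exp algebra_simps)
  then show ?thesis using False by (intro mult_nonpos_nonneg) auto
qed

lemma chord_product_tp2:
  fixes c \<alpha> \<beta> x z :: real
  assumes "0 < \<beta>" "\<beta> \<le> \<alpha>" "z \<le> x" "c > 0"
  shows "max 0 (\<alpha>*x * (c - \<alpha>*x)) * max 0 (\<beta>*z * (c - \<beta>*z))
       \<le> max 0 (\<beta>*x * (c - \<beta>*x)) * max 0 (\<alpha>*z * (c - \<alpha>*z))"
proof -
  consider "z \<le> 0" | "\<alpha>*x \<ge> c" | "0 < z" "\<alpha>*x < c" by linarith
  then show ?thesis
  proof cases
    case 1
    then have "\<beta>*z \<le> 0" using assms by (simp add: mult_nonneg_nonpos)
    then have "\<beta>*z * (c - \<beta>*z) \<le> 0" using mult_nonpos_nonneg[of "\<beta>*z" "c - \<beta>*z"] assms by linarith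
    then show ?thesis by simp
  next
    case 2
    then have "\<alpha>*x * (c - \<alpha>*x) \<le> 0" using assms by (intro mult_nonneg_nonpos) auto
    then show ?thesis by simp
  next
    case 3
    have "\<beta>*z \<le> \<alpha>*z" "\<alpha>*z \<le> \<alpha>*x" "\<beta>*x \<le> \<alpha>*x"
      using assms 3 by (auto intro: mult_right_mono mult_left_mono)
    then have "\<beta>*z < c" "\<alpha>*z < c" using 3 by linarith+
    then have pos: "0 < \<alpha>*x * (c - \<alpha>*x)" "0 < \<beta>*z * (c - \<beta>*z)" "0 \<le> \<alpha>*z * (c - \<alpha>*z)"
      using assms 3 by (simp_all add: mult_pos_pos)
    have "\<beta>*x * (c - \<beta>*x) * (\<alpha>*z * (c - \<alpha>*z)) - \<alpha>*x * (c - \<alpha>*x) * (\<beta>*z * (c - \<beta>*z))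
        = \<alpha>*\<beta>*x*z * (c * ((\<alpha> - \<beta>) * (x - z)))"
      by (simp add: algebra_simps)
    also have "\<dots> \<ge> 0" using assms 3 by simp
    finally have "\<alpha>*x * (c - \<alpha>*x) * (\<beta>*z * (c - \<beta>*z)) \<le> \<beta>*x * (c - \<beta>*x) * (\<alpha>*z * (c - \<alpha>*z))"
      by simp
    also have "\<dots> \<le> max 0 (\<beta>*x * (c - \<beta>*x)) * max 0 (\<alpha>*z * (c - \<alpha>*z))"
      using pos by (intro mult_mono) auto
    finally show ?thesis using pos by simp
  qed
qed

lemma exponential_density_moments:
  fixes l :: real
  assumes l: "l > 0"
  shows "integrable lborel (\<lambda>r. indicator {0..} r * (l * exp (-l*r)))"
    "(\<integral>r. indicator {0..} r * (l * exp (-l*r)) \<partial>lborel) = 1"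
    "integrable lborel (\<lambda>r. indicator {0..} r * (r * (l * exp (-l*r))))"
    "(\<integral>r. indicator {0..} r * (r * (l * exp (-l*r))) \<partial>lborel) = 1/l"
proof -
  have "(\<integral>\<^sup>+ x. ennreal (indicator {0..} x * (l * exp (-l*x))) \<partial>lborel) =
      (\<integral>\<^sup>+ x. ennreal (erlang_density 0 l x * x ^ 0) \<partial>lborel)"
    by (intro nn_integral_cong) (auto simp: erlang_density_def mult.commute split: split_indicator)
  also have "\<dots> = ennreal 1" using nn_integral_erlang_ith_moment[OF l, of 0 0] by simp
  finally have e0: "(\<integral>\<^sup>+ x. ennreal (indicator {0..} x * (l * exp (-l*x))) \<partial>lborel) = ennreal 1" .
  have "(\<integral>\<^sup>+ x. ennreal (indicator {0..} x * (x * (l * exp (-l*x)))) \<partial>lborel) =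
      (\<integral>\<^sup>+ x. ennreal (erlang_density 0 l x * x ^ 1) \<partial>lborel)"
    by (intro nn_integral_cong)
      (auto simp: erlang_density_def mult.commute mult.left_commute split: split_indicator)
  also have "\<dots> = ennreal (1/l)" using nn_integral_erlang_ith_moment[OF l, of 0 1] l by (simp add: divide_ennreal)
  finally have e1: "(\<integral>\<^sup>+ x. ennreal (indicator {0..} x * (x * (l * exp (-l*x)))) \<partial>lborel) = ennreal (1/l)" .
  have n0: "AE x in lborel. 0 \<le> indicator {0..} x * (l * exp (-l*x))" using l by auto
  have n1: "AE x in lborel. 0 \<le> indicator {0..} x * (x * (l * exp (-l*x)))"
    using l by (auto split: split_indicator)
  from nn_integral_eq_integrable[OF _ n0, of 1] e0
  show "integrable lborel (\<lambda>r. indicator {0..} r * (l * exp (-l*r)))"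
    "(\<integral>r. indicator {0..} r * (l * exp (-l*r)) \<partial>lborel) = 1" by auto
  from nn_integral_eq_integrable[OF _ n1, of "1/l"] e1 l
  show "integrable lborel (\<lambda>r. indicator {0..} r * (r * (l * exp (-l*r))))"
    "(\<integral>r. indicator {0..} r * (r * (l * exp (-l*r))) \<partial>lborel) = 1/l" by auto
qed

lemma set_integral_snd_by_slices:
  fixes S :: "('a::euclidean_space \<times> real) set" and f \<sigma> :: "real \<Rightarrow> real"
  assumes S: "S \<in> sets borel" and f: "f \<in> borel_measurable borel" "\<And>r. f r \<ge> 0"
    and slice: "\<And>r. emeasure lborel {x. (x, r) \<in> S} = ennreal (\<sigma> r)"
    and \<sigma>: "\<And>r. \<sigma> r \<ge> 0" "\<sigma> \<in> borel_measurable borel"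
  shows "(LINT z:S|lborel. f (snd z)) = (\<integral>r. \<sigma> r * f r \<partial>lborel)"
proof -
  let ?g = "\<lambda>z. indicator S z * f (snd z)"
  have "(snd :: 'a \<times> real \<Rightarrow> real) \<in> borel_measurable borel"
    by (intro borel_measurable_continuous_onI continuous_on_snd continuous_on_id)
  then have "(\<lambda>z. f (snd z)) \<in> borel_measurable (borel :: ('a \<times> real) measure)"
    using measurable_compose f(1) by blast
  then have "?g \<in> borel_measurable (borel :: ('a \<times> real) measure)"
    using S by measurable
  then have meas: "?g \<in> borel_measurable (lborel :: ('a \<times> real) measure)"
    by (simp add: measurable_lborel1)
  have S_prod: "S \<in> sets (lborel \<Otimes>\<^sub>M (lborel :: real measure) :: ('a \<times> real) measure)"
    unfolding lborel_prod using S by simp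
  have "(LINT z:S|lborel. f (snd z)) = enn2real (\<integral>\<^sup>+ z. ennreal (?g z) \<partial>lborel)"
    unfolding set_lebesgue_integral_def
    by (simp add: integral_eq_nn_integral[OF meas] f(2))
  also have "(\<integral>\<^sup>+ z. ennreal (?g z) \<partial>lborel) = (\<integral>\<^sup>+ r. (\<integral>\<^sup>+ x. ennreal (?g (x, r)) \<partial>lborel) \<partial>lborel)"
    using lborel_pair.nn_integral_snd[of "\<lambda>z. ennreal (?g z)"] measurable_compose[OF meas measurable_ennreal]
    by (simp add: lborel_prod)
  also have "\<dots> = (\<integral>\<^sup>+ r. ennreal (\<sigma> r * f r) \<partial>lborel)"
  proof (rule nn_integral_cong)
    fix r :: real
    have "{x. (x, r) \<in> S} \<in> sets (lborel :: 'a measure)"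
      using sets_Pair2[OF S_prod, of r] by (simp add: vimage_def)
    then have "(\<integral>\<^sup>+ x. ennreal (?g (x, r)) \<partial>lborel) = ennreal (f r) * emeasure lborel {x. (x, r) \<in> S}"
      by (subst nn_integral_cmult_indicator[symmetric]) (auto intro!: nn_integral_cong split: split_indicator)
    then show "(\<integral>\<^sup>+ x. ennreal (?g (x, r)) \<partial>lborel) = ennreal (\<sigma> r * f r)"
      using slice[of r] \<sigma>(1)[of r] f(2)[of r] by (simp add: ennreal_mult' mult.commute)
  qed
  also have "enn2real \<dots> = (\<integral>r. \<sigma> r * f r \<partial>lborel)"
    by (rule integral_eq_nn_integral[symmetric]) (use f \<sigma> in auto)
  finally show ?thesis .
qed

lemma continuous_on_root_of_strictly_decreasing:
  fixes F :: "real \<Rightarrow> real \<Rightarrow> real" and r :: "real \<Rightarrow> real"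
  assumes root: "\<And>y. y \<in> S \<Longrightarrow> r y > 0 \<and> F y (r y) = c"
    and decreasing: "\<And>y l1 l2. y \<in> S \<Longrightarrow> 0 < l1 \<Longrightarrow> l1 < l2 \<Longrightarrow> F y l2 < F y l1"
    and continuous: "\<And>y l. y \<in> S \<Longrightarrow> l > 0 \<Longrightarrow> continuous (at y within S) (\<lambda>y. F y l)"
  shows "continuous_on S r"
  unfolding continuous_on_def
proof (intro ballI tendstoI)
  fix y0 e :: real assume y0: "y0 \<in> S" and "e > 0"
  define a b where "a = r y0 - min e (r y0 / 2)" and "b = r y0 + min e (r y0 / 2)"
  have "0 < a" "a < r y0" "r y0 < b" "0 < b" using root[OF y0] \<open>e > 0\<close> by (auto simp: a_def b_def)
  have root_between: "a < r y \<and> r y < b" if "y \<in> S" "c < F y a" "F y b < c" for y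
  proof -
    have "\<not> r y < a" "\<not> b < r y" using decreasing[OF \<open>y \<in> S\<close>] root[OF \<open>y \<in> S\<close>] that \<open>0 < a\<close> \<open>0 < b\<close>
      by (smt (verit))+
    moreover have "r y \<noteq> a" "r y \<noteq> b" using root[OF \<open>y \<in> S\<close>] that by auto
    ultimately show ?thesis by linarith
  qed
  have "c < F y0 a" "F y0 b < c"
    using decreasing[OF y0] root[OF y0] \<open>0 < a\<close> \<open>a < r y0\<close> \<open>r y0 < b\<close> by (metis less_trans)+
  moreover have "((\<lambda>y. F y a) \<longlongrightarrow> F y0 a) (at y0 within S)" "((\<lambda>y. F y b) \<longlongrightarrow> F y0 b) (at y0 within S)"
    using continuous[OF y0] \<open>0 < a\<close> \<open>0 < b\<close> by (auto simp: continuous_within)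
  ultimately have "eventually (\<lambda>y. c < F y a) (at y0 within S)" "eventually (\<lambda>y. F y b < c) (at y0 within S)"
    by (auto intro: order_tendstoD)
  moreover have "eventually (\<lambda>y. y \<in> S) (at y0 within S)" by (simp add: eventually_at_filter)
  ultimately show "eventually (\<lambda>y. dist (r y) (r y0) < e) (at y0 within S)"
  proof eventually_elim
    case (elim y)
    with root_between have "a < r y" "r y < b" by auto
    then show ?case using \<open>e > 0\<close> by (auto simp: a_def b_def dist_real_def)
  qed
qed

text \<open>Abstract form of the integrals: \<open>A\<close> is the measure of \<open>D\<^sub>b\<close>, and \<open>P \<lambda>\<close>, \<open>Q \<lambda>\<close> are the
  zeroth and first vertical moments of \<open>\<lambda> e\<^bsup>-\<lambda>r\<^esup>\<close> over the ball of radius \<open>R\<close> centred at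
  height 0. Shifting the ball to height \<open>y\<close> multiplies them by \<open>e\<^bsup>-\<lambda>y\<^esup>\<close>, which gives the three
  integrals \<open>Z_in\<close>, \<open>Z_out\<close>, \<open>N_out\<close> of the equations.\<close>
locale mass_profile =
  fixes A R :: real and P Q :: "real \<Rightarrow> real"
  assumes R_pos: "R > 0"
    and P_pos: "\<And>l. l > 0 \<Longrightarrow> P l > 0"
    and continuous_P: "continuous_on {0<..} P" and continuous_Q: "continuous_on {0<..} Q"
    and inner_lt_total: "\<And>l y. l > 0 \<Longrightarrow> y \<ge> R \<Longrightarrow> exp (-l*y) * P l < A"
    and outer_moment_nonneg: "\<And>l y. l > 0 \<Longrightarrow> y \<ge> R \<Longrightarrow> exp (-l*y) * (y * P l + Q l) \<le> A/l"
    and inner_moment_pos: "\<And>l. l > 0 \<Longrightarrow> R * P l + Q l > 0"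
    and inner_at_R_tendsto_0: "((\<lambda>l. exp (-l*R) * P l) \<longlongrightarrow> 0) at_top"
    and outer_mean_decreasing: "\<And>y l1 l2. y \<ge> R \<Longrightarrow> 0 < l1 \<Longrightarrow> l1 < l2 \<Longrightarrow>
       (A/l2 - exp (-l2*y) * (y * P l2 + Q l2)) / (A - exp (-l2*y) * P l2)
       \<le> (A/l1 - exp (-l1*y) * (y * P l1 + Q l1)) / (A - exp (-l1*y) * P l1)"
    and scaled_inner_mean_increasing: "\<And>l1 l2. 0 < l1 \<Longrightarrow> l1 \<le> l2 \<Longrightarrow>
       l1 * (R + Q l1 / P l1) \<le> l2 * (R + Q l2 / P l2)"
begin

definition Z_in :: "real \<Rightarrow> real \<Rightarrow> real" where "Z_in y l = exp (-l*y) * P l"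
definition Z_out :: "real \<Rightarrow> real \<Rightarrow> real" where "Z_out y l = A - Z_in y l"
definition N_out :: "real \<Rightarrow> real \<Rightarrow> real" where "N_out y l = A/l - exp (-l*y) * (y * P l + Q l)"

lemma Z_in_pos: "l > 0 \<Longrightarrow> Z_in y l > 0"
  using P_pos by (simp add: Z_in_def)

lemma Z_in_antimono_height: "l > 0 \<Longrightarrow> y1 \<le> y2 \<Longrightarrow> Z_in y2 l \<le> Z_in y1 l"
  using P_pos[of l] by (simp add: Z_in_def mult_right_mono)

lemma Z_out_pos: "l > 0 \<Longrightarrow> y \<ge> R \<Longrightarrow> Z_out y l > 0"
  using inner_lt_total by (simp add: Z_out_def Z_in_def)

lemma A_pos: "A > 0"
  using Z_in_pos[of 1 R] Z_out_pos[of 1 R] by (simp add: Z_out_def)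

lemma N_out_nonneg: "l > 0 \<Longrightarrow> y \<ge> R \<Longrightarrow> N_out y l \<ge> 0"
  using outer_moment_nonneg by (simp add: N_out_def)

lemma N_out_le: assumes "l > 0" "y \<ge> R" shows "N_out y l \<le> A/l"
proof -
  have "y * P l + Q l \<ge> R * P l + Q l" using P_pos[OF assms(1)] assms(2) by (simp add: mult_right_mono)
  then show ?thesis using inner_moment_pos[OF assms(1)] by (simp add: N_out_def)
qed

lemma outer_mean_antimono:
  "y \<ge> R \<Longrightarrow> 0 < l1 \<Longrightarrow> l1 < l2 \<Longrightarrow> N_out y l2 / Z_out y l2 \<le> N_out y l1 / Z_out y l1"
  using outer_mean_decreasing by (simp add: N_out_def Z_out_def Z_in_def)

lemma Z_in_eventually_lt:
  assumes "c > 0" "y \<ge> R" shows "eventually (\<lambda>l. Z_in y l < c) at_top"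
  using order_tendstoD(2)[OF inner_at_R_tendsto_0 assms(1)] eventually_gt_at_top[of 0]
proof eventually_elim
  case (elim l)
  then show ?case using Z_in_antimono_height[of l R y] assms(2) by (simp add: Z_in_def)
qed

end

locale reduced_system = mass_profile +
  fixes m M g E d :: real
  assumes m_pos: "m > 0" and M_pos: "M > 0" and g_pos: "g > 0" and d_pos: "d > 0"
    and E_gt: "E > M * g * R"
begin

definition energy :: "real \<Rightarrow> real \<Rightarrow> real" where
  "energy y l = d*m*g/(2*l) + m*g*(N_out y l / Z_out y l) + M*g*y"

definition solves_2star :: "real \<Rightarrow> real \<Rightarrow> bool" where
  "solves_2star y l \<longleftrightarrow> energy y l = E"

definition solves_star :: "real \<Rightarrow> real \<Rightarrow> bool" where
  "solves_star y l \<longleftrightarrow> M = m * (Z_in y l / Z_out y l)"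

lemma height_below_iff: "M*g*y < E \<longleftrightarrow> y < E/(M*g)"
  using M_pos g_pos by (simp add: field_simps)

lemma energy_strict_antimono:
  assumes "y \<ge> R" "0 < l1" "l1 < l2" shows "energy y l2 < energy y l1"
proof -
  have "d*m*g/(2*l2) < d*m*g/(2*l1)"
    using assms d_pos m_pos g_pos by (intro divide_strict_left_mono) auto
  moreover have "m*g*(N_out y l2 / Z_out y l2) \<le> m*g*(N_out y l1 / Z_out y l1)"
    using outer_mean_antimono[OF assms] m_pos g_pos by (intro mult_left_mono) auto
  ultimately show ?thesis unfolding energy_def by linarith
qed

lemma continuous_on_energy: "y \<ge> R \<Longrightarrow> continuous_on {0<..} (energy y)"
  using Z_out_pos unfolding energy_def N_out_def Z_out_def Z_in_def
  by (intro continuous_intros continuous_P continuous_Q) auto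

lemma isCont_energy_height: "l > 0 \<Longrightarrow> y \<ge> R \<Longrightarrow> isCont (\<lambda>y. energy y l) y"
  using Z_out_pos unfolding energy_def N_out_def Z_out_def Z_in_def
  by (intro continuous_intros) auto

lemma energy_ge: assumes "l > 0" "y \<ge> R" shows "energy y l \<ge> d*m*g/(2*l) + M*g*y"
proof -
  have "0 \<le> m*g*(N_out y l / Z_out y l)"
    using N_out_nonneg[OF assms] Z_out_pos[OF assms] m_pos g_pos by simp
  then show ?thesis unfolding energy_def by linarith
qed

lemma energy_eventually_lt:
  assumes "y \<ge> R" "M*g*y < E" shows "eventually (\<lambda>l. energy y l < E) at_top"
proof -
  define K where "K = d*m*g/2 + 2*m*g"
  have "eventually (\<lambda>l. Z_in y l < A/2) at_top" using Z_in_eventually_lt[of "A/2" y] A_pos assms by simp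
  moreover have "eventually (\<lambda>l. l > K/(E - M*g*y) \<and> l > 0) at_top"
    by (intro eventually_conj eventually_gt_at_top)
  ultimately show ?thesis
  proof eventually_elim
    case (elim l)
    then have "l > 0" "Z_out y l \<ge> A/2" by (auto simp: Z_out_def)
    have "N_out y l / Z_out y l \<le> (A/l) / (A/2)"
      using N_out_le N_out_nonneg assms A_pos \<open>l > 0\<close> \<open>Z_out y l \<ge> A/2\<close> by (intro frac_le) auto
    also have "\<dots> = 2/l" using A_pos by simp
    finally have "m*g*(N_out y l / Z_out y l) \<le> m*g*(2/l)"
      using m_pos g_pos by (intro mult_left_mono) auto
    then have "energy y l \<le> d*m*g/(2*l) + m*g*(2/l) + M*g*y" unfolding energy_def by linarith
    also have "d*m*g/(2*l) + m*g*(2/l) = K/l" using \<open>l > 0\<close> by (simp add: K_def field_simps)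
    also have "K/l < E - M*g*y" using elim assms by (simp add: field_simps)
    finally show ?case by simp
  qed
qed

lemma energy_unique_root:
  assumes "y \<ge> R" "M*g*y < E" shows "\<exists>!l. l > 0 \<and> energy y l = E"
proof -
  have "M*g*y > 0" using M_pos g_pos R_pos assms(1) by simp
  moreover have "M*g*R > 0" using M_pos g_pos R_pos by simp
  ultimately have "E > 0" using E_gt by linarith
  define l0 where "l0 = d*m*g/(2*E)"
  have "l0 > 0" using d_pos m_pos g_pos \<open>E > 0\<close> by (simp add: l0_def)
  have "d*m*g/(2*l0) = E" using \<open>E > 0\<close> d_pos m_pos g_pos by (simp add: l0_def)
  then have "energy y l0 > E" using energy_ge[OF \<open>l0 > 0\<close> assms(1)] \<open>M*g*y > 0\<close> by linarith
  obtain l1 where "l1 \<ge> l0" "energy y l1 < E"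
    using eventually_conj[OF energy_eventually_lt[OF assms] eventually_ge_at_top[of l0]]
    by (auto simp: eventually_at_top_linorder)
  moreover have "continuous_on {l0..l1} (energy y)"
    by (rule continuous_on_subset[OF continuous_on_energy[OF assms(1)]]) (use \<open>l0 > 0\<close> in auto)
  ultimately obtain l where "l0 \<le> l" "energy y l = E"
    using IVT2'[of "energy y" l1 E l0] \<open>energy y l0 > E\<close> by auto
  then have "l > 0 \<and> energy y l = E" using \<open>l0 > 0\<close> by simp
  then show ?thesis
    using energy_strict_antimono[OF assms(1)] by (metis linorder_neqE_linordered_idom less_irrefl)
qed

definition lam_of :: "real \<Rightarrow> real" where "lam_of y = (THE l. l > 0 \<and> energy y l = E)"

lemma lam_of: assumes "R \<le> y" "y < E/(M*g)" shows "lam_of y > 0" "energy y (lam_of y) = E"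
  using theI'[OF energy_unique_root] assms height_below_iff unfolding lam_of_def by auto

lemma lam_of_unique: "R \<le> y \<Longrightarrow> y < E/(M*g) \<Longrightarrow> l > 0 \<Longrightarrow> energy y l = E \<Longrightarrow> lam_of y = l"
  using energy_unique_root lam_of height_below_iff by blast

lemma continuous_on_lam_of: "y1 < E/(M*g) \<Longrightarrow> continuous_on {R..y1} lam_of"
  by (rule continuous_on_root_of_strictly_decreasing[where F = energy and c = E])
    (auto intro: lam_of energy_strict_antimono continuous_at_imp_continuous_within isCont_energy_height)

text \<open>\<open>(\<ast>)\<close> fixes the inner mass at \<open>Z_star\<close>; along \<open>(\<ast>)\<close> the height drops out of \<open>(\<ast>\<ast>)\<close>,
  leaving \<open>energy_star \<lambda> = E\<close>.\<close>
definition Z_star :: real where "Z_star = A*M/(m+M)"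
definition energy_star :: "real \<Rightarrow> real" where
  "energy_star l = d*m*g/(2*l) + (m+M)*g/l - M*g*(Q l / P l)"

lemma star_equation_iff:
  assumes "R \<le> y" "l > 0" shows "solves_star y l \<longleftrightarrow> Z_in y l = Z_star"
proof -
  have "solves_star y l \<longleftrightarrow> M * (A - Z_in y l) = m * Z_in y l"
    using Z_out_pos[OF assms(2,1)] by (simp add: solves_star_def Z_out_def divide_simps)
  also have "\<dots> \<longleftrightarrow> Z_in y l = Z_star"
    using m_pos M_pos unfolding Z_star_def by (auto simp: field_simps)
  finally show ?thesis .
qed

lemma energy_eq_energy_star:
  assumes "l > 0" "Z_in y l = Z_star" shows "energy y l = energy_star l"
proof -
  have "exp (-l*y) = Z_star / P l" using assms P_pos[OF assms(1)] by (simp add: Z_in_def field_simps)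
  then have N: "N_out y l = A/l - Z_star * (y + Q l / P l)"
    using P_pos[OF assms(1)] by (simp add: N_out_def field_simps)
  have Z: "Z_out y l = A*m/(m+M)"
    using assms(2) m_pos M_pos by (simp add: Z_out_def Z_star_def field_simps)
  have "m*g*(N_out y l / Z_out y l) = (m+M)*g/l - M*g*y - M*g*(Q l / P l)"
    unfolding N Z Z_star_def using A_pos m_pos M_pos assms(1)
    by (simp add: field_simps add_pos_pos[THEN less_imp_neq, THEN not_sym])
  then show ?thesis unfolding energy_def energy_star_def by simp
qed

lemma energy_star_level_unique:
  assumes "0 < l1" "0 < l2" "energy_star l1 = E" "energy_star l2 = E" shows "l1 = l2"
proof -
  define K where "K = d*m*g/2 + (m+M)*g"
  have level: "(E - M*g*R) * l = K - M*g*(l * (R + Q l / P l))" if "l > 0" "energy_star l = E" for l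
  proof -
    have "energy_star l * l = d*m*g/(2*l)*l + (m+M)*g/l*l - M*g*(Q l / P l)*l"
      by (simp add: energy_star_def algebra_simps)
    also have "\<dots> = K - M*g*(l * (Q l / P l))" using \<open>l > 0\<close> by (simp add: K_def)
    finally show ?thesis using \<open>energy_star l = E\<close> by (simp add: algebra_simps)
  qed
  have le: "l2 \<le> l1" if "0 < l1" "l1 \<le> l2" "energy_star l1 = E" "energy_star l2 = E" for l1 l2
  proof -
    have "0 < l2" using that by linarith
    have "M*g*(l1 * (R + Q l1 / P l1)) \<le> M*g*(l2 * (R + Q l2 / P l2))"
      using scaled_inner_mean_increasing[OF that(1,2)] M_pos g_pos by (intro mult_left_mono) auto
    then have "(E - M*g*R) * l2 \<le> (E - M*g*R) * l1"
      using level[OF that(1,3)] level[OF \<open>0 < l2\<close> that(4)] by linarith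
    then show ?thesis using E_gt by simp
  qed
  show ?thesis using le[of l1 l2] le[of l2 l1] assms by linarith
qed

lemma exists_height_inner_below_star:
  obtains y1 where "R \<le> y1" "y1 < E/(M*g)" "Z_in y1 (lam_of y1) \<le> Z_star"
proof -
  have "Z_star > 0" using A_pos m_pos M_pos by (simp add: Z_star_def)
  then obtain L where L: "\<And>l. l \<ge> L \<Longrightarrow> Z_in R l < Z_star \<and> 0 < l"
    using eventually_conj[OF Z_in_eventually_lt[OF _ order_refl] eventually_gt_at_top[of 0]]
    by (auto simp: eventually_at_top_linorder)
  then have "L > 0" by blast
  define y1 where "y1 = max R (E/(M*g) - d*m/(2*M*L))"
  have "R < E/(M*g)" using E_gt height_below_iff by simp
  moreover have "d*m/(2*M*L) > 0" using d_pos m_pos M_pos \<open>L > 0\<close> by simp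
  ultimately have "R \<le> y1" "y1 < E/(M*g)" by (auto simp: y1_def)
  note lam = lam_of[OF this]
  have "d*m*g/(2 * lam_of y1) \<le> E - M*g*y1"
    using energy_ge[OF lam(1) \<open>R \<le> y1\<close>] lam(2) by linarith
  also have "\<dots> \<le> E - M*g*(E/(M*g) - d*m/(2*M*L))"
    using M_pos g_pos by (intro diff_left_mono mult_left_mono) (auto simp: y1_def)
  also have "\<dots> = d*m*g/(2*L)" using M_pos g_pos by (simp add: field_simps)
  finally have "L \<le> lam_of y1"
    using lam(1) \<open>L > 0\<close> d_pos m_pos g_pos by (simp add: frac_le_eq divide_le_eq field_simps)
  then have "Z_in y1 (lam_of y1) \<le> Z_in R (lam_of y1)" "Z_in R (lam_of y1) < Z_star"
    using Z_in_antimono_height[OF lam(1) \<open>R \<le> y1\<close>] L by auto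
  then show ?thesis using that \<open>R \<le> y1\<close> \<open>y1 < E/(M*g)\<close> by simp
qed

text \<open>Intermediate value theorem for the inner mass along the curve \<open>y \<mapsto> (y, lam_of y)\<close> of solutions
  of \<open>(\<ast>\<ast>)\<close>: the hypothesis puts it above \<open>Z_star\<close> at \<open>y = R\<close>.\<close>
lemma exists_solution:
  assumes "0 < l0" "energy R l0 = E" "M < m*(Z_in R l0 / Z_out R l0)"
  obtains y where "R \<le> y" "y < E/(M*g)" "Z_in y (lam_of y) = Z_star"
proof -
  have "R < E/(M*g)" using E_gt height_below_iff by simp
  then have "lam_of R = l0" using lam_of_unique assms by simp
  have "M * (A - Z_in R l0) < m * Z_in R l0"
    using assms(3) Z_out_pos[OF assms(1) order_refl] by (simp add: Z_out_def field_simps)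
  then have "Z_star < Z_in R (lam_of R)"
    using \<open>lam_of R = l0\<close> m_pos M_pos by (simp add: Z_star_def field_simps)
  obtain y1 where y1: "R \<le> y1" "y1 < E/(M*g)" "Z_in y1 (lam_of y1) \<le> Z_star"
    by (rule exists_height_inner_below_star)
  have "lam_of ` {R..y1} \<subseteq> {0<..}" using lam_of y1(2) by fastforce
  then have "continuous_on {R..y1} (\<lambda>y. Z_in y (lam_of y))"
    unfolding Z_in_def using continuous_on_lam_of[OF y1(2)]
    by (intro continuous_intros continuous_on_compose2[OF continuous_P]) auto
  then obtain y where "R \<le> y" "y \<le> y1" "Z_in y (lam_of y) = Z_star"
    using IVT2'[of "\<lambda>y. Z_in y (lam_of y)", OF y1(3) _ y1(1)] \<open>Z_star < Z_in R (lam_of R)\<close> by fastforce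
  then show ?thesis using that y1(2) by simp
qed

lemma solution_unique:
  assumes "0 < l1" "Z_in y1 l1 = Z_star" "energy y1 l1 = E"
    and "0 < l2" "Z_in y2 l2 = Z_star" "energy y2 l2 = E"
  shows "y1 = y2 \<and> l1 = l2"
proof -
  have "l1 = l2"
    using energy_star_level_unique assms energy_eq_energy_star by metis
  then have "exp (-l1*y1) * P l1 = exp (-l1*y2) * P l1" using assms(2,5) by (simp add: Z_in_def)
  then have "exp (-l1*y1) = exp (-l1*y2)" using P_pos[OF assms(1)] by simp
  then show ?thesis using \<open>l1 = l2\<close> assms(1) by simp
qed

lemma solution_height_bounds:
  assumes "0 < l0" "solves_2star R l0" "M < m*(Z_in R l0 / Z_out R l0)"
    and "R \<le> y" "0 < l" "solves_star y l" "solves_2star y l"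
  shows "R < y \<and> y < E/(M*g)"
proof
  have "d*m*g/(2*l) > 0" using d_pos m_pos g_pos assms(5) by simp
  then have "M*g*y < E" using energy_ge[OF assms(5,4)] assms(7) by (simp add: solves_2star_def)
  then show "y < E/(M*g)" using height_below_iff by simp
  show "R < y"
  proof (rule ccontr)
    assume "\<not> R < y"
    then have "y = R" using assms(4) by simp
    then have "l = l0"
      using lam_of_unique assms E_gt height_below_iff unfolding solves_2star_def by (metis order_refl)
    then show False using assms(3,6) \<open>y = R\<close> by (simp add: solves_star_def)
  qed
qed

lemma unique_solution:
  assumes "0 < l0" "solves_2star R l0" "M < m*(Z_in R l0 / Z_out R l0)"
  shows "\<exists>!p::real \<times> real. R \<le> fst p \<and> snd p > 0 \<and> solves_star (fst p) (snd p) \<and> solves_2star (fst p) (snd p)"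
proof -
  obtain y where y: "R \<le> y" "y < E/(M*g)" "Z_in y (lam_of y) = Z_star"
    using exists_solution assms unfolding solves_2star_def by blast
  note lam = lam_of[OF y(1,2)]
  show ?thesis
  proof (rule ex1I[of _ "(y, lam_of y)"])
    show "R \<le> fst (y, lam_of y) \<and> snd (y, lam_of y) > 0 \<and>
        solves_star (fst (y, lam_of y)) (snd (y, lam_of y)) \<and> solves_2star (fst (y, lam_of y)) (snd (y, lam_of y))"
      using y lam star_equation_iff[OF y(1) lam(1)] by (simp add: solves_2star_def)
  next
    fix p :: "real \<times> real"
    assume p: "R \<le> fst p \<and> snd p > 0 \<and> solves_star (fst p) (snd p) \<and> solves_2star (fst p) (snd p)"
    then have "fst p = y \<and> snd p = lam_of y"
      using solution_unique[of "snd p" "fst p" "lam_of y" y] star_equation_iff y(3) lam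
      unfolding solves_2star_def by blast
    then show "p = (y, lam_of y)" by (simp add: prod_eq_iff)
  qed
qed

theorem reduced_system_solutions:
  "(\<exists>!l. l > 0 \<and> solves_2star R l) \<and>
   (\<forall>ls. ls > 0 \<and> solves_2star R ls \<and> M < m * (Z_in R ls / Z_out R ls) \<longrightarrow>
     (\<exists>!p::real \<times> real. R \<le> fst p \<and> snd p > 0 \<and> solves_star (fst p) (snd p) \<and> solves_2star (fst p) (snd p)) \<and>
     (\<forall>y l. R \<le> y \<and> l > 0 \<and> solves_star y l \<and> solves_2star y l \<longrightarrow> R < y \<and> y < E/(M*g)))"
proof -
  have main: "(\<exists>!p::real \<times> real. R \<le> fst p \<and> snd p > 0 \<and> solves_star (fst p) (snd p) \<and> solves_2star (fst p) (snd p)) \<and>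
     (\<forall>y l. R \<le> y \<and> l > 0 \<and> solves_star y l \<and> solves_2star y l \<longrightarrow> R < y \<and> y < E/(M*g))"
    if "ls > 0" "solves_2star R ls" "M < m * (Z_in R ls / Z_out R ls)" for ls
    using unique_solution[OF that] solution_height_bounds[OF that] by blast
  show ?thesis
    by (intro conjI[OF energy_unique_root[OF order_refl E_gt, folded solves_2star_def]] allI impI)
      (elim conjE, erule main)
qed

end

text \<open>\<open>slice_area s\<close> is the measure of the horizontal section at vertical distance \<open>s\<close> from the
  centre of a ball of radius \<open>R\<close> in \<open>\<real>\<^sup>k \<times> \<real>\<close>, where \<open>V\<close> is the volume of the unit ball of \<open>\<real>\<^sup>k\<close>;
  \<open>A\<close> stands for the measure of \<open>D\<^sub>b\<close>, which contains the largest section.\<close>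
locale ball_slices =
  fixes V R A :: real and k :: nat
  assumes V_pos: "V > 0" and R_pos: "R > 0" and k_pos: "k \<ge> 1" and ball_le_total: "V * R^k \<le> A"
begin

definition slice_area :: "real \<Rightarrow> real" where
  "slice_area s = V * sqrt (max 0 (R\<^sup>2 - s\<^sup>2)) ^ k"

definition inner_mass :: "real \<Rightarrow> real" where
  "inner_mass l = (\<integral>x. slice_area x * (l * exp (-l*x)) \<partial>lborel)"

definition inner_moment :: "real \<Rightarrow> real" where
  "inner_moment l = (\<integral>x. x * (slice_area x * (l * exp (-l*x))) \<partial>lborel)"

definition outer_slice :: "real \<Rightarrow> real \<Rightarrow> real" where
  "outer_slice y r = indicator {0..} r * (A - slice_area (r - y))"

lemma A_pos: "A > 0"
proof -
  have "V * R^k > 0" using V_pos R_pos by simp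
  then show ?thesis using ball_le_total by linarith
qed

lemma continuous_slice_area: "continuous_on UNIV slice_area"
  unfolding slice_area_def by (intro continuous_intros)

lemma slice_area_nonneg: "slice_area s \<ge> 0"
  using V_pos by (simp add: slice_area_def)

lemma chord_le_radius: "sqrt (max 0 (R\<^sup>2 - s\<^sup>2)) \<le> R"
  using R_pos real_sqrt_le_mono[of "max 0 (R\<^sup>2 - s\<^sup>2)" "R\<^sup>2"] by simp

lemma slice_area_le_total: "slice_area s \<le> A"
proof -
  have "slice_area s \<le> V * R^k"
    unfolding slice_area_def using V_pos chord_le_radius by (intro mult_left_mono power_mono) auto
  then show ?thesis using ball_le_total by linarith
qed

lemma slice_area_eq_0: "\<bar>s\<bar> \<ge> R \<Longrightarrow> slice_area s = 0"
  using R_pos k_pos abs_le_square_iff[of R s] by (simp add: slice_area_def power_0_left)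

lemma slice_area_antimono: "\<bar>s\<bar> \<le> \<bar>t\<bar> \<Longrightarrow> slice_area t \<le> slice_area s"
  unfolding slice_area_def using V_pos abs_le_square_iff[of s t]
  by (intro mult_left_mono power_mono real_sqrt_le_mono) auto

lemma slice_area_shift_R: "slice_area (s - R) = V * sqrt (max 0 (s * (2*R - s))) ^ k"
proof -
  have "R\<^sup>2 - (s - R)\<^sup>2 = s * (2*R - s)" by (simp add: power2_eq_square algebra_simps)
  then show ?thesis unfolding slice_area_def by simp
qed

lemma integrable_slice_area_mult:
  "continuous_on UNIV f \<Longrightarrow> integrable lborel (\<lambda>s. slice_area (s - y) * f s)"
  by (rule integrable_continuous_vanishing_outside[of _ "y - R" "y + R"])
    (auto intro!: continuous_intros continuous_on_compose2[OF continuous_slice_area] slice_area_eq_0)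

lemma integrable_inner_mass: "integrable lborel (\<lambda>x. slice_area x * (l * exp (-l*x)))"
  using integrable_slice_area_mult[of "\<lambda>x. l * exp (-l*x)" 0] by (simp add: continuous_intros)

lemma integrable_inner_moment: "integrable lborel (\<lambda>x. x * (slice_area x * (l * exp (-l*x))))"
  using integrable_slice_area_mult[of "\<lambda>x. x * (l * exp (-l*x))" 0] by (simp add: continuous_intros mult_ac)

lemma inner_integral_shift:
  "(\<integral>r. f r * (slice_area (r - y) * (l * exp (-l*r))) \<partial>lborel)
    = exp (-l*y) * (\<integral>x. f (y + x) * (slice_area x * (l * exp (-l*x))) \<partial>lborel)"
proof -
  have "(\<integral>r. f r * (slice_area (r - y) * (l * exp (-l*r))) \<partial>lborel)
      = (\<integral>x. f (y + x) * (slice_area x * (l * exp (-l*(y + x)))) \<partial>lborel)"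
    by (subst lborel_integral_real_affine[where c=1 and t=y]) simp_all
  also have "\<dots> = (\<integral>x. exp (-l*y) * (f (y + x) * (slice_area x * (l * exp (-l*x)))) \<partial>lborel)"
    by (simp only: distrib_left exp_add mult_ac)
  finally show ?thesis by simp
qed

lemma inner_mass_shift: "(\<integral>r. slice_area (r - y) * (l * exp (-l*r)) \<partial>lborel) = exp (-l*y) * inner_mass l"
  using inner_integral_shift[of "\<lambda>_. 1"] by (simp add: inner_mass_def)

lemma inner_first_moment:
  "(\<integral>x. (y + x) * (slice_area x * (l * exp (-l*x))) \<partial>lborel) = y * inner_mass l + inner_moment l"
  unfolding inner_mass_def inner_moment_def distrib_right
  using integrable_inner_mass integrable_inner_moment by (subst Bochner_Integration.integral_add) auto

lemma inner_moment_shift: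
  "(\<integral>r. slice_area (r - y) * (r * (l * exp (-l*r))) \<partial>lborel)
    = exp (-l*y) * (y * inner_mass l + inner_moment l)"
proof -
  have "(\<integral>r. slice_area (r - y) * (r * (l * exp (-l*r))) \<partial>lborel)
      = (\<integral>r. r * (slice_area (r - y) * (l * exp (-l*r))) \<partial>lborel)"
    by (simp only: mult.left_commute)
  also have "\<dots> = exp (-l*y) * (\<integral>x. (y + x) * (slice_area x * (l * exp (-l*x))) \<partial>lborel)"
    by (rule inner_integral_shift)
  finally show ?thesis by (simp only: inner_first_moment)
qed

text \<open>Below height \<open>0\<close> both sides vanish, since the ball lies above height \<open>y - R \<ge> 0\<close>.\<close>
lemma outer_slice_mult:
  assumes "y \<ge> R" shows "outer_slice y r * f = A * (indicator {0..} r * f) - slice_area (r - y) * f"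
  using assms slice_area_eq_0[of "r - y"] by (cases "r \<ge> 0") (auto simp: outer_slice_def algebra_simps)

lemma outer_slice_nonneg: "outer_slice y r \<ge> 0"
  using slice_area_le_total by (simp add: outer_slice_def)

lemma outer_mass_integral:
  assumes "y \<ge> R" "l > 0"
  shows "integrable lborel (\<lambda>r. outer_slice y r * (l * exp (-l*r)))"
    "(\<integral>r. outer_slice y r * (l * exp (-l*r)) \<partial>lborel) = A - exp (-l*y) * inner_mass l"
proof -
  note moments = exponential_density_moments[OF assms(2)]
  have "integrable lborel (\<lambda>r. slice_area (r - y) * (l * exp (-l*r)))"
    by (rule integrable_slice_area_mult) (intro continuous_intros)
  with moments show "integrable lborel (\<lambda>r. outer_slice y r * (l * exp (-l*r)))"
    "(\<integral>r. outer_slice y r * (l * exp (-l*r)) \<partial>lborel) = A - exp (-l*y) * inner_mass l"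
    unfolding outer_slice_mult[OF assms(1)] using inner_mass_shift by auto
qed

lemma outer_moment_integral:
  assumes "y \<ge> R" "l > 0"
  shows "integrable lborel (\<lambda>r. outer_slice y r * (r * (l * exp (-l*r))))"
    "(\<integral>r. outer_slice y r * (r * (l * exp (-l*r))) \<partial>lborel)
      = A/l - exp (-l*y) * (y * inner_mass l + inner_moment l)"
proof -
  note moments = exponential_density_moments[OF assms(2)]
  have "integrable lborel (\<lambda>r. slice_area (r - y) * (r * (l * exp (-l*r))))"
    by (rule integrable_slice_area_mult) (intro continuous_intros)
  with moments show "integrable lborel (\<lambda>r. outer_slice y r * (r * (l * exp (-l*r))))"
    "(\<integral>r. outer_slice y r * (r * (l * exp (-l*r))) \<partial>lborel)
      = A/l - exp (-l*y) * (y * inner_mass l + inner_moment l)"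
    unfolding outer_slice_mult[OF assms(1)] using inner_moment_shift by auto
qed

lemma slice_area_half_radius_pos: "slice_area (R/2) > 0"
proof -
  have "R\<^sup>2 - (R/2)\<^sup>2 > 0" using R_pos by (simp add: power2_eq_square field_simps)
  then show ?thesis unfolding slice_area_def using V_pos by simp
qed

lemma inner_integral_pos:
  assumes "l > 0" "continuous_on UNIV \<phi>" "\<And>x. x \<ge> -R \<Longrightarrow> \<phi> x \<ge> 0"
    "\<And>x. x \<in> {0..R/2} \<Longrightarrow> \<phi> x \<ge> c" "c > 0"
  shows "(\<integral>x. \<phi> x * (slice_area x * (l * exp (-l*x))) \<partial>lborel) > 0"
proof (rule integral_pos_of_lower_bound_on_interval)
  show "integrable lborel (\<lambda>x. \<phi> x * (slice_area x * (l * exp (-l*x))))"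
    using integrable_slice_area_mult[of "\<lambda>x. \<phi> x * (l * exp (-l*x))" 0] assms(2)
    by (simp add: continuous_intros mult_ac)
  show "0 \<le> \<phi> x * (slice_area x * (l * exp (-l*x)))" for x
    using assms(1,3) slice_area_nonneg slice_area_eq_0[of x] by (cases "x \<ge> -R") auto
  show "c * (slice_area (R/2) * (l * exp (-l*(R/2)))) \<le> \<phi> x * (slice_area x * (l * exp (-l*x)))"
    if "x \<in> {0..R/2}" for x
    using that assms slice_area_half_radius_pos slice_area_antimono[of x "R/2"]
    by (intro mult_mono) auto
  show "0 < c * (slice_area (R/2) * (l * exp (-l*(R/2))))"
    using assms slice_area_half_radius_pos by simp
qed (use R_pos in simp)

lemma inner_mass_pos: "l > 0 \<Longrightarrow> inner_mass l > 0"
  using inner_integral_pos[of l "\<lambda>_. 1" 1] by (simp add: inner_mass_def)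

lemma inner_moment_pos: assumes "l > 0" shows "R * inner_mass l + inner_moment l > 0"
  unfolding inner_first_moment[symmetric]
proof (rule inner_integral_pos)
  show "continuous_on UNIV (\<lambda>x. R + x)" by (intro continuous_intros)
qed (use R_pos assms in auto)

lemma inner_lt_total:
  assumes "l > 0" "y \<ge> R" shows "exp (-l*y) * inner_mass l < A"
proof -
  have "(\<integral>r. outer_slice y r * (l * exp (-l*r)) \<partial>lborel) > 0"
  proof (rule integral_pos_of_lower_bound_on_interval[of _ "y+R" "y+R+1" "A * (l * exp (-l*(y+R+1)))"])
    show "integrable lborel (\<lambda>r. outer_slice y r * (l * exp (-l*r)))"
      using outer_mass_integral[OF assms(2,1)] by simp
    show "0 \<le> outer_slice y x * (l * exp (-l*x))" for x
      using outer_slice_nonneg assms by simp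
    show "0 < A * (l * exp (-l*(y+R+1)))" using A_pos assms by simp
    fix x assume x: "x \<in> {y+R..y+R+1}"
    then have "outer_slice y x = A" using slice_area_eq_0[of "x - y"] R_pos assms by (auto simp: outer_slice_def)
    then show "A * (l * exp (-l*(y+R+1))) \<le> outer_slice y x * (l * exp (-l*x))"
      using x A_pos assms by simp
  qed simp
  then show ?thesis using outer_mass_integral[OF assms(2,1)] by simp
qed

lemma outer_moment_nonneg:
  assumes "l > 0" "y \<ge> R" shows "exp (-l*y) * (y * inner_mass l + inner_moment l) \<le> A/l"
proof -
  have "0 \<le> (\<integral>r. outer_slice y r * (r * (l * exp (-l*r))) \<partial>lborel)"
  proof (rule Bochner_Integration.integral_nonneg)
    show "0 \<le> outer_slice y r * (r * (l * exp (-l*r)))" for r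
      using outer_slice_nonneg[of y r] assms by (cases "r \<ge> 0") (auto simp: outer_slice_def)
  qed
  then show ?thesis using outer_moment_integral[OF assms(2,1)] by simp
qed

lemma continuous_on_inner_integral:
  assumes "continuous_on UNIV (\<lambda>(l, x). f l x)"
  shows "continuous_on S (\<lambda>l. \<integral>x. slice_area x * f l x \<partial>lborel)"
proof -
  have "continuous_on (S \<times> cbox (-R) R) (\<lambda>p. slice_area (snd p))"
    by (rule continuous_on_compose2[OF continuous_slice_area]) (auto intro: continuous_intros)
  moreover have "continuous_on (S \<times> cbox (-R) R) (\<lambda>p. f (fst p) (snd p))"
    using continuous_on_subset[OF assms] by (simp add: case_prod_beta)
  ultimately have continuous: "continuous_on (S \<times> cbox (-R) R) (\<lambda>(l, x). slice_area x * f l x)"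
    unfolding case_prod_beta by (rule continuous_on_mult)
  have eq: "(\<integral>x. slice_area x * f l x \<partial>lborel) = integral (cbox (-R) R) (\<lambda>x. slice_area x * f l x)" for l
  proof -
    have "continuous_on UNIV (f l)"
      using continuous_on_compose2[OF assms, of UNIV "\<lambda>x. (l, x)"] by (simp add: continuous_intros)
    then have "continuous_on {-R..R} (\<lambda>x. slice_area x * f l x)"
      by (intro continuous_on_mult continuous_on_subset[OF continuous_slice_area]
          continuous_on_subset[OF \<open>continuous_on UNIV (f l)\<close>]) auto
    then have "set_integrable lborel {-R..R} (\<lambda>x. slice_area x * f l x)"
      by (rule borel_integrable_atLeastAtMost')
    moreover have "(\<integral>x. slice_area x * f l x \<partial>lborel) = (LINT x:{-R..R}|lborel. slice_area x * f l x)"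
      unfolding set_lebesgue_integral_def
      by (rule Bochner_Integration.integral_cong) (auto simp: slice_area_eq_0 split: split_indicator)
    ultimately show ?thesis using set_borel_integral_eq_integral(2) by (simp add: cbox_interval)
  qed
  show ?thesis unfolding eq by (rule integral_continuous_on_param[OF continuous])
qed

lemma continuous_inner_mass: "continuous_on {0<..} inner_mass"
  unfolding inner_mass_def
  by (rule continuous_on_inner_integral) (unfold case_prod_beta, intro continuous_intros)

lemma continuous_inner_moment: "continuous_on {0<..} inner_moment"
  unfolding inner_moment_def mult.left_commute[of _ "slice_area _"]
  by (rule continuous_on_inner_integral) (unfold case_prod_beta, intro continuous_intros)

lemma slice_area_shift_le:
  assumes "\<delta> > 0"
  shows "slice_area (r - R) \<le> indicator {0..} r * (V*R^(k-1)*\<delta>/2 + V*R^(k-1)*R/\<delta> * r)"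
proof (cases "r \<ge> 0")
  case False
  then have "\<bar>r - R\<bar> \<ge> R" using R_pos by auto
  then show ?thesis using slice_area_eq_0 False by simp
next
  case True
  define t where "t = sqrt (max 0 (R\<^sup>2 - (r - R)\<^sup>2))"
  have "0 \<le> t" "t \<le> R" unfolding t_def using chord_le_radius by simp_all
  have "(\<delta>/2 + R*r/\<delta>)\<^sup>2 - 2*R*r = (\<delta>/2 - R*r/\<delta>)\<^sup>2"
    using assms by (simp add: power2_eq_square field_simps)
  moreover have "max 0 (R\<^sup>2 - (r - R)\<^sup>2) \<le> 2*R*r"
    using True R_pos by (simp add: power2_eq_square algebra_simps)
  ultimately have "max 0 (R\<^sup>2 - (r - R)\<^sup>2) \<le> (\<delta>/2 + R*r/\<delta>)\<^sup>2"
    using zero_le_power2[of "\<delta>/2 - R*r/\<delta>"] by linarith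
  then have "t \<le> sqrt ((\<delta>/2 + R*r/\<delta>)\<^sup>2)" unfolding t_def by (rule real_sqrt_le_mono)
  then have "t \<le> \<delta>/2 + R*r/\<delta>" using assms True R_pos by simp
  have "t^k = t * t^(k-1)" using k_pos by (metis Suc_diff_le diff_Suc_1 power_Suc)
  also have "\<dots> \<le> t * R^(k-1)" using \<open>0 \<le> t\<close> \<open>t \<le> R\<close> by (intro mult_left_mono power_mono) auto
  finally have "slice_area (r - R) \<le> V * (t * R^(k-1))"
    unfolding slice_area_def t_def[symmetric] using V_pos by simp
  also have "\<dots> \<le> V * ((\<delta>/2 + R*r/\<delta>) * R^(k-1))"
    using V_pos \<open>t \<le> \<delta>/2 + R*r/\<delta>\<close> R_pos by (intro mult_left_mono mult_right_mono) auto
  also have "\<dots> = V*R^(k-1)*\<delta>/2 + V*R^(k-1)*R/\<delta> * r" by (simp add: field_simps)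
  finally show ?thesis using True by simp
qed

lemma inner_at_R_le:
  assumes "\<delta> > 0" "l > 0"
  shows "exp (-l*R) * inner_mass l \<le> V*R^(k-1)*\<delta>/2 + V*R^(k-1)*R/\<delta> * (1/l)"
proof -
  define C where "C = V*R^(k-1)"
  note moments = exponential_density_moments[OF assms(2)]
  have "exp (-l*R) * inner_mass l = (\<integral>r. slice_area (r - R) * (l * exp (-l*r)) \<partial>lborel)"
    using inner_mass_shift by simp
  also have "\<dots> \<le> (\<integral>r. (C*\<delta>/2) * (indicator {0..} r * (l * exp (-l*r)))
      + (C*R/\<delta>) * (indicator {0..} r * (r * (l * exp (-l*r)))) \<partial>lborel)"
  proof (rule integral_mono)
    show "integrable lborel (\<lambda>r. slice_area (r - R) * (l * exp (-l*r)))"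
      by (rule integrable_slice_area_mult) (intro continuous_intros)
    show "integrable lborel (\<lambda>r. (C*\<delta>/2) * (indicator {0..} r * (l * exp (-l*r)))
      + (C*R/\<delta>) * (indicator {0..} r * (r * (l * exp (-l*r)))))"
      using moments by auto
    fix r
    have "slice_area (r - R) * (l * exp (-l*r)) \<le> indicator {0..} r * (C*\<delta>/2 + C*R/\<delta> * r) * (l * exp (-l*r))"
      using slice_area_shift_le[OF assms(1), of r] assms(2) unfolding C_def by (intro mult_right_mono) auto
    then show "slice_area (r - R) * (l * exp (-l*r)) \<le> (C*\<delta>/2) * (indicator {0..} r * (l * exp (-l*r)))
      + (C*R/\<delta>) * (indicator {0..} r * (r * (l * exp (-l*r))))"
      by (simp add: algebra_simps)
  qed
  also have "\<dots> = C*\<delta>/2 + C*R/\<delta> * (1/l)" using moments by (subst Bochner_Integration.integral_add) auto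
  finally show ?thesis by (simp add: C_def)
qed

lemma inner_at_R_tendsto_0: "((\<lambda>l. exp (-l*R) * inner_mass l) \<longlongrightarrow> 0) at_top"
proof (rule tendstoI)
  fix \<epsilon> :: real assume "\<epsilon> > 0"
  define C where "C = V*R^(k-1)"
  have "C > 0" using V_pos R_pos by (simp add: C_def)
  define \<delta> where "\<delta> = \<epsilon> / C"
  have "\<delta> > 0" "C*\<delta>/2 = \<epsilon>/2" using \<open>\<epsilon> > 0\<close> \<open>C > 0\<close> by (simp_all add: \<delta>_def)
  have "eventually (\<lambda>l. l > 2*C*R/(\<delta>*\<epsilon>) \<and> l > 0) at_top"
    by (intro eventually_conj eventually_gt_at_top)
  then show "eventually (\<lambda>l. dist (exp (-l*R) * inner_mass l) 0 < \<epsilon>) at_top"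
  proof eventually_elim
    case (elim l)
    then have "2*C*R < l * (\<delta>*\<epsilon>)" using \<open>\<delta> > 0\<close> \<open>\<epsilon> > 0\<close> by (simp add: field_simps)
    then have "C*R/\<delta> * (1/l) < \<epsilon>/2" using elim \<open>\<delta> > 0\<close> by (simp add: field_simps)
    moreover have "exp (-l*R) * inner_mass l \<le> C*\<delta>/2 + C*R/\<delta> * (1/l)"
      using inner_at_R_le[OF \<open>\<delta> > 0\<close>, of l] elim unfolding C_def by simp
    ultimately have "exp (-l*R) * inner_mass l < \<epsilon>" using \<open>C*\<delta>/2 = \<epsilon>/2\<close> by linarith
    moreover have "0 < exp (-l*R) * inner_mass l" using inner_mass_pos elim by simp
    ultimately show ?case by simp
  qed
qed

lemma outer_mean_decreasing:
  assumes "y \<ge> R" "0 < l1" "l1 < l2"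
  shows "(A/l2 - exp (-l2*y) * (y * inner_mass l2 + inner_moment l2)) / (A - exp (-l2*y) * inner_mass l2)
    \<le> (A/l1 - exp (-l1*y) * (y * inner_mass l1 + inner_moment l1)) / (A - exp (-l1*y) * inner_mass l1)"
proof -
  have "l2 > 0" using assms by simp
  define p q where "p = (\<lambda>r. outer_slice y r * (l1 * exp (-l1*r)))"
    and "q = (\<lambda>r. outer_slice y r * (l2 * exp (-l2*r)))"
  have Xp: "(\<lambda>r. r * p r) = (\<lambda>r. outer_slice y r * (r * (l1 * exp (-l1*r))))"
    and Xq: "(\<lambda>r. r * q r) = (\<lambda>r. outer_slice y r * (r * (l2 * exp (-l2*r))))"
    by (auto simp: p_def q_def mult_ac)
  note integrals = outer_mass_integral[OF assms(1,2)] outer_mass_integral[OF assms(1) \<open>l2 > 0\<close>]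
    outer_moment_integral[OF assms(1,2)] outer_moment_integral[OF assms(1) \<open>l2 > 0\<close>]
  have "(\<integral>r. r * q r \<partial>lborel) / (\<integral>r. q r \<partial>lborel) \<le> (\<integral>r. r * p r \<partial>lborel) / (\<integral>r. p r \<partial>lborel)"
  proof (rule chebyshev_mean_le[where X = "\<lambda>r. r"])
    show "integrable lborel p" "integrable lborel q" using integrals by (simp_all add: p_def q_def)
    show "integrable lborel (\<lambda>r. r * p r)" "integrable lborel (\<lambda>r. r * q r)"
      unfolding Xp Xq using integrals by simp_all
    show "(\<integral>r. p r \<partial>lborel) > 0" "(\<integral>r. q r \<partial>lborel) > 0"
      using integrals inner_lt_total assms \<open>l2 > 0\<close> by (simp_all add: p_def q_def)
    show "(x - z) * (q x * p z - p x * q z) \<le> 0" for x z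
    proof -
      have "(x - z) * (q x * p z - p x * q z) = (outer_slice y x * outer_slice y z * l1 * l2)
          * ((x - z) * (exp (-l2*x) * exp (-l1*z) - exp (-l1*x) * exp (-l2*z)))"
        by (simp add: p_def q_def algebra_simps)
      also have "\<dots> \<le> 0"
        by (rule mult_nonneg_nonpos[OF _ exp_kernel_cross_difference_nonpos])
          (use outer_slice_nonneg assms in auto)
      finally show ?thesis .
    qed
  qed
  then show ?thesis unfolding Xp Xq unfolding p_def q_def using integrals by simp
qed

definition scaled_weight :: "real \<Rightarrow> real \<Rightarrow> real" where
  "scaled_weight l x = slice_area (x/l - R) * exp (-x)"

text \<open>The substitution \<open>r = x/\<lambda> - R\<close> moves the \<open>\<lambda>\<close>-dependence from the density into the profile.\<close>
lemma inner_integral_rescaled: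
  assumes "l > 0"
  shows "(\<integral>x. f x * (slice_area x * (l * exp (-l*x))) \<partial>lborel)
    = exp (l*R) * (\<integral>x. f (x/l - R) * scaled_weight l x \<partial>lborel)"
proof -
  have "(\<integral>x. f x * (slice_area x * (l * exp (-l*x))) \<partial>lborel)
      = \<bar>1/l\<bar> *\<^sub>R (\<integral>x. f (-R + 1/l*x) * (slice_area (-R + 1/l*x) * (l * exp (-l*(-R + 1/l*x)))) \<partial>lborel)"
    using assms by (subst lborel_integral_real_affine[where c="1/l" and t="-R"]) simp_all
  also have "(\<integral>x. f (-R + 1/l*x) * (slice_area (-R + 1/l*x) * (l * exp (-l*(-R + 1/l*x)))) \<partial>lborel)
      = (\<integral>x. (l * exp (l*R)) * (f (x/l - R) * scaled_weight l x) \<partial>lborel)"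
  proof (rule Bochner_Integration.integral_cong[OF refl])
    fix x
    have "exp (-l*(-R + 1/l*x)) = exp (l*R) * exp (-x)"
      using assms by (simp add: field_simps flip: exp_add)
    then show "f (-R + 1/l*x) * (slice_area (-R + 1/l*x) * (l * exp (-l*(-R + 1/l*x))))
        = (l * exp (l*R)) * (f (x/l - R) * scaled_weight l x)"
      by (simp add: scaled_weight_def mult_ac)
  qed
  finally show ?thesis using assms by simp
qed

lemma inner_mass_rescaled: "l > 0 \<Longrightarrow> inner_mass l = exp (l*R) * (\<integral>x. scaled_weight l x \<partial>lborel)"
  using inner_integral_rescaled[of l "\<lambda>_. 1"] by (simp add: inner_mass_def)

lemma inner_first_moment_rescaled:
  assumes "l > 0"
  shows "R * inner_mass l + inner_moment l = exp (l*R) / l * (\<integral>x. x * scaled_weight l x \<partial>lborel)"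
proof -
  have "R * inner_mass l + inner_moment l = (\<integral>x. (R + x) * (slice_area x * (l * exp (-l*x))) \<partial>lborel)"
    by (rule inner_first_moment[symmetric])
  also have "\<dots> = exp (l*R) * (\<integral>x. (R + (x/l - R)) * scaled_weight l x \<partial>lborel)"
    by (rule inner_integral_rescaled[OF assms])
  finally show ?thesis by simp
qed

lemma integrable_scaled_weight:
  assumes "l > 0" "continuous_on UNIV f" shows "integrable lborel (\<lambda>x. f x * scaled_weight l x)"
proof (rule integrable_continuous_vanishing_outside[of _ 0 "2*R*l"])
  show "continuous_on UNIV (\<lambda>x. f x * scaled_weight l x)" unfolding scaled_weight_def using assms
    by (intro continuous_intros continuous_on_compose2[OF continuous_slice_area]) auto
  fix x assume "x \<notin> {0..2*R*l}"
  then have "x/l < 0 \<or> x/l > 2*R" using assms by (auto simp: field_simps)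
  then have "\<bar>x/l - R\<bar> \<ge> R" using R_pos by auto
  then show "f x * scaled_weight l x = 0" unfolding scaled_weight_def using slice_area_eq_0 by simp
qed

lemma scaled_slice_area_tp2:
  assumes "0 < l1" "l1 \<le> l2" "z \<le> x"
  shows "slice_area (x/l1 - R) * slice_area (z/l2 - R) \<le> slice_area (x/l2 - R) * slice_area (z/l1 - R)"
proof -
  define u where "u s = max 0 (s * (2*R - s))" for s
  have "u (x/l1) * u (z/l2) \<le> u (x/l2) * u (z/l1)"
    using chord_product_tp2[of "1/l2" "1/l1" z x "2*R"] assms R_pos by (simp add: u_def frac_le)
  moreover have "slice_area (s/l - R) * slice_area (t/l' - R) = V*V * sqrt (u (s/l) * u (t/l')) ^ k" for s t l l'
    unfolding slice_area_shift_R u_def by (simp add: real_sqrt_mult power_mult_distrib)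
  ultimately show ?thesis
    using V_pos by (simp add: mult_left_mono power_mono real_sqrt_le_mono u_def)
qed

lemma scaled_weight_cross_difference_nonpos:
  assumes "0 < l1" "l1 \<le> l2"
  shows "(x - z) * (scaled_weight l1 x * scaled_weight l2 z - scaled_weight l2 x * scaled_weight l1 z) \<le> 0"
proof (cases "z \<le> x")
  case True
  then have "scaled_weight l1 x * scaled_weight l2 z \<le> scaled_weight l2 x * scaled_weight l1 z"
    using scaled_slice_area_tp2[OF assms True] unfolding scaled_weight_def
    by (simp add: mult_right_mono mult_ac)
  then show ?thesis using True by (intro mult_nonneg_nonpos) auto
next
  case False
  then have "scaled_weight l2 x * scaled_weight l1 z \<le> scaled_weight l1 x * scaled_weight l2 z"
    using scaled_slice_area_tp2[OF assms, of x z] unfolding scaled_weight_def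
    by (simp add: mult_right_mono mult_ac)
  then show ?thesis using False by (intro mult_nonpos_nonneg) auto
qed

lemma scaled_inner_mean_increasing:
  assumes "0 < l1" "l1 \<le> l2"
  shows "l1 * (R + inner_moment l1 / inner_mass l1) \<le> l2 * (R + inner_moment l2 / inner_mass l2)"
proof -
  have "l2 > 0" using assms by simp
  have weight_pos: "(\<integral>x. scaled_weight l x \<partial>lborel) > 0" if "l > 0" for l
    using inner_mass_pos[OF that] unfolding inner_mass_rescaled[OF that] by (simp add: zero_less_mult_iff)
  have mean: "l * (R + inner_moment l / inner_mass l)
      = (\<integral>x. x * scaled_weight l x \<partial>lborel) / (\<integral>x. scaled_weight l x \<partial>lborel)" if "l > 0" for l
  proof -
    have "l * (R + inner_moment l / inner_mass l) = l * (R * inner_mass l + inner_moment l) / inner_mass l"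
      using inner_mass_pos[OF that] by (simp add: field_simps)
    also have "\<dots> = l * (exp (l*R) / l * (\<integral>x. x * scaled_weight l x \<partial>lborel)) / inner_mass l"
      unfolding inner_first_moment_rescaled[OF that] ..
    also have "\<dots> = (\<integral>x. x * scaled_weight l x \<partial>lborel) / (\<integral>x. scaled_weight l x \<partial>lborel)"
      unfolding inner_mass_rescaled[OF that] using that by simp
    finally show ?thesis .
  qed
  have "(\<integral>x. x * scaled_weight l1 x \<partial>lborel) / (\<integral>x. scaled_weight l1 x \<partial>lborel)
      \<le> (\<integral>x. x * scaled_weight l2 x \<partial>lborel) / (\<integral>x. scaled_weight l2 x \<partial>lborel)"
  proof (rule chebyshev_mean_le[where X = "\<lambda>x. x"])
    show "(x - z) * (scaled_weight l1 x * scaled_weight l2 z - scaled_weight l2 x * scaled_weight l1 z) \<le> 0"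
      for x z by (rule scaled_weight_cross_difference_nonpos[OF assms])
  qed (use integrable_scaled_weight[of _ "\<lambda>_. 1"] integrable_scaled_weight[of _ "\<lambda>x. x"]
      weight_pos assms \<open>l2 > 0\<close> in \<open>auto intro: continuous_intros\<close>)
  then show ?thesis using mean assms \<open>l2 > 0\<close> by simp
qed

end

sublocale ball_slices \<subseteq> profile: mass_profile A R inner_mass inner_moment
  using R_pos inner_mass_pos continuous_inner_mass continuous_inner_moment inner_lt_total
    outer_moment_nonneg inner_moment_pos inner_at_R_tendsto_0 outer_mean_decreasing
    scaled_inner_mean_increasing
  by unfold_locales simp_all

lemma Db_prime_ball_subset:
  assumes "R > 0" "xt \<in> Db_prime Db R" shows "ball xt R \<subseteq> Db"
proof
  fix x assume "x \<in> ball xt R"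
  then have "(x, 2*R) \<in> ball (xt, 2*R) R" by (simp add: dist_Pair_Pair)
  moreover have "ball (xt, 2*R) R \<subseteq> cyl Db" using assms by (auto simp: Db_prime_def)
  ultimately show "x \<in> Db" by (auto simp: cyl_def)
qed

locale cylinder_ball =
  fixes Db :: "'a::euclidean_space set" and R :: real and xt :: 'a
  assumes open_Db: "open Db" and bounded_Db: "bounded Db" and R_pos: "R > 0"
    and ball_subset: "ball xt R \<subseteq> Db"
begin

definition unit_ball_volume :: real where "unit_ball_volume = measure lborel (ball (0::'a) 1)"
definition A :: real where "A = measure lborel Db"

lemma emeasure_ball:
  "\<rho> \<ge> 0 \<Longrightarrow> emeasure lborel (ball c \<rho>) = ennreal (unit_ball_volume * \<rho> ^ DIM('a))" for c :: 'a
  using content_ball_conv_unit_ball[of \<rho> c] emeasure_lborel_ball_finite[of c \<rho>]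
  by (simp add: emeasure_eq_ennreal_measure unit_ball_volume_def mult.commute)

lemma emeasure_Db: "emeasure lborel Db = ennreal A"
  using emeasure_bounded_finite[OF bounded_Db] by (simp add: A_def emeasure_eq_ennreal_measure)

sublocale slices: ball_slices unit_ball_volume R A "DIM('a)"
proof
  show "unit_ball_volume > 0" unfolding unit_ball_volume_def by (rule content_ball_pos) simp
  show "1 \<le> DIM('a)" by (simp add: DIM_positive Suc_le_eq)
  have "ennreal (unit_ball_volume * R ^ DIM('a)) = emeasure lborel (ball xt R)"
    using emeasure_ball R_pos by simp
  also have "\<dots> \<le> emeasure lborel Db"
    using ball_subset by (intro emeasure_mono) (auto intro: borel_open open_Db)
  finally show "unit_ball_volume * R ^ DIM('a) \<le> A" by (simp add: emeasure_Db A_def)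
qed (rule R_pos)

lemma slice_of_ball: "{x. (x, r) \<in> ball (xt, y) R} = ball xt (sqrt (max 0 (R\<^sup>2 - (r - y)\<^sup>2)))"
proof -
  have "(x, r) \<in> ball (xt, y) R \<longleftrightarrow> (dist xt x)\<^sup>2 < max 0 (R\<^sup>2 - (r - y)\<^sup>2)" for x
  proof -
    have "(x, r) \<in> ball (xt, y) R \<longleftrightarrow> sqrt ((dist xt x)\<^sup>2 + (r - y)\<^sup>2) < sqrt (R\<^sup>2)"
      using R_pos by (simp add: dist_Pair_Pair dist_real_def power2_commute)
    also have "\<dots> \<longleftrightarrow> (dist xt x)\<^sup>2 + (r - y)\<^sup>2 < R\<^sup>2" by (rule real_sqrt_less_iff)
    also have "\<dots> \<longleftrightarrow> (dist xt x)\<^sup>2 < max 0 (R\<^sup>2 - (r - y)\<^sup>2)"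
      unfolding max_def using zero_le_power2[of "dist xt x"] by (smt (verit))
    finally show ?thesis .
  qed
  then show ?thesis
    using real_sqrt_less_iff[of "(dist xt _)\<^sup>2"] by (auto simp del: real_sqrt_less_iff)
qed

lemma emeasure_slice_ball: "emeasure lborel {x. (x, r) \<in> ball (xt, y) R} = ennreal (slices.slice_area (r - y))"
  unfolding slice_of_ball by (simp add: emeasure_ball slices.slice_area_def)

lemma emeasure_slice_outside:
  assumes "y \<ge> R" shows "emeasure lborel {x. (x, r) \<in> cyl Db - ball (xt, y) R} = ennreal (slices.outer_slice y r)"
proof (cases "r \<ge> 0")
  case False
  then show ?thesis by (simp add: cyl_def slices.outer_slice_def)
next
  case True
  define B where "B = {x. (x, r) \<in> ball (xt, y) R}"
  have "B \<subseteq> Db" unfolding B_def slice_of_ball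
    using slices.chord_le_radius ball_subset by (meson order_trans subset_ball)
  have "{x. (x, r) \<in> cyl Db - ball (xt, y) R} = Db - B" using True by (auto simp: cyl_def B_def)
  moreover have "emeasure lborel (Db - B) = emeasure lborel Db - emeasure lborel B"
    using \<open>B \<subseteq> Db\<close> open_Db emeasure_slice_ball
    by (intro emeasure_Diff) (auto simp: B_def slice_of_ball)
  ultimately show ?thesis
    using True slices.slice_area_nonneg emeasure_slice_ball
    by (simp add: B_def emeasure_Db ennreal_minus slices.outer_slice_def)
qed

lemma cyl_minus_ball_borel: "cyl Db - ball (xt, y) R \<in> sets borel"
proof -
  have "cyl Db = (Db \<times> UNIV) \<inter> (UNIV \<times> {0..})" by (auto simp: cyl_def)
  then show ?thesis using open_Db by (simp add: borel_open borel_closed open_Times closed_Times)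
qed

lemma int_in_eq_Z_in:
  assumes "l > 0" shows "int_in Db R xt y l = slices.profile.Z_in y l"
proof -
  have "int_in Db R xt y l = (\<integral>r. slices.slice_area (r - y) * (l * exp (-l*r)) \<partial>lborel)"
    unfolding int_in_def
  proof (rule set_integral_snd_by_slices)
    show "(\<lambda>r. slices.slice_area (r - y)) \<in> borel_measurable borel"
      by (intro borel_measurable_continuous_onI continuous_on_compose2[OF slices.continuous_slice_area]
          continuous_intros) auto
    show "emeasure lborel {x. (x, r) \<in> ball (xt, y) R} = ennreal (slices.slice_area (r - y))" for r
      by (rule emeasure_slice_ball)
  qed (use assms in \<open>auto intro: borel_measurable_continuous_onI continuous_intros
      simp: emeasure_slice_ball slices.slice_area_nonneg\<close>)
  then show ?thesis by (simp only: slices.inner_mass_shift slices.profile.Z_in_def)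
qed

lemma measurable_outer_slice: "slices.outer_slice y \<in> borel_measurable borel"
proof -
  have "(\<lambda>r. slices.slice_area (r - y)) \<in> borel_measurable borel"
    by (intro borel_measurable_continuous_onI continuous_on_compose2[OF slices.continuous_slice_area]
        continuous_intros) auto
  then show ?thesis unfolding slices.outer_slice_def[abs_def] by measurable
qed

lemma outside_integral_by_slices:
  assumes "y \<ge> R" "f \<in> borel_measurable borel" "\<And>r. f r \<ge> 0"
  shows "(LINT z : cyl Db - ball (xt, y) R | lborel. f (snd z)) = (\<integral>r. slices.outer_slice y r * f r \<partial>lborel)"
proof (rule set_integral_snd_by_slices)
  show "emeasure lborel {x. (x, r) \<in> cyl Db - ball (xt, y) R} = ennreal (slices.outer_slice y r)" for r
    using assms(1) by (rule emeasure_slice_outside)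
qed (use assms cyl_minus_ball_borel slices.outer_slice_nonneg measurable_outer_slice in auto)

lemma int_out_eq_Z_out:
  assumes "l > 0" "y \<ge> R" shows "int_out Db R xt y l = slices.profile.Z_out y l"
proof -
  have "int_out Db R xt y l = (\<integral>r. slices.outer_slice y r * (l * exp (-l*r)) \<partial>lborel)"
    unfolding int_out_def using assms
    by (intro outside_integral_by_slices) (auto intro: borel_measurable_continuous_onI continuous_intros)
  then show ?thesis
    using slices.outer_mass_integral(2)[OF assms(2,1)]
    by (simp add: slices.profile.Z_out_def slices.profile.Z_in_def)
qed

text \<open>Slicing needs a nonnegative integrand; on the cylinder \<open>r = max 0 r\<close>.\<close>
lemma rint_out_eq_N_out:
  assumes "l > 0" "y \<ge> R" shows "rint_out Db R xt y l = slices.profile.N_out y l"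
proof -
  have "rint_out Db R xt y l
      = (LINT z : cyl Db - ball (xt, y) R | lborel. max 0 (snd z) * (l * exp (- l * snd z)))"
    unfolding rint_out_def
    by (rule set_lebesgue_integral_cong) (use cyl_minus_ball_borel in \<open>auto simp: cyl_def\<close>)
  also have "\<dots> = (\<integral>r. slices.outer_slice y r * (max 0 r * (l * exp (- l * r))) \<partial>lborel)"
    using assms
    by (intro outside_integral_by_slices) (auto intro: borel_measurable_continuous_onI continuous_intros)
  also have "\<dots> = (\<integral>r. slices.outer_slice y r * (r * (l * exp (- l * r))) \<partial>lborel)"
    by (rule Bochner_Integration.integral_cong) (auto simp: slices.outer_slice_def max_def)
  finally show ?thesis
    using slices.outer_moment_integral(2)[OF assms(2,1)] by (simp add: slices.profile.N_out_def)
qed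

end

theorem theorem2p2:
  fixes Db :: "'a::euclidean_space set" and R m M g E :: real and xt :: 'a
  assumes "smooth_bounded_domain Db"
    and "R > 0"
    and "inner_ball_condition Db R"
    and "\<exists>c. cball c R \<subseteq> interior (cyl Db)"
    and "m > 0" and "M > 0" and "g > 0" and "E > M * g * R"
    and "xt \<in> Db_prime Db R"
  shows "(\<exists>!l. l > 0 \<and> eq_2star Db R xt m M g E R l) \<and>
    (\<forall>ls. ls > 0 \<and> eq_2star Db R xt m M g E R ls \<and>
        M < m * (int_in Db R xt R ls / int_out Db R xt R ls) \<longrightarrow>
      (\<exists>!p::real \<times> real. R \<le> fst p \<and> snd p > 0 \<and>
          eq_star Db R xt m M (fst p) (snd p) \<and> eq_2star Db R xt m M g E (fst p) (snd p)) \<and>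
      (\<forall>y l. R \<le> y \<and> l > 0 \<and> eq_star Db R xt m M y l \<and> eq_2star Db R xt m M g E y l
          \<longrightarrow> R < y \<and> y < E / (M * g)))"
proof -
  have "ball xt R \<subseteq> Db" using assms(2,9) by (rule Db_prime_ball_subset)
  then interpret cylinder_ball Db R xt
    using assms(1,2) by unfold_locales (auto simp: smooth_bounded_domain_def)
  interpret sys: reduced_system A R slices.inner_mass slices.inner_moment m M g E "real (DIM('a) + 1)"
    using assms(2,5-8) by unfold_locales simp_all
  have ratio: "int_in Db R xt y l / int_out Db R xt y l = slices.profile.Z_in y l / slices.profile.Z_out y l"
    if "R \<le> y" "0 < l" for y l
    using that by (simp add: int_in_eq_Z_in int_out_eq_Z_out)
  have star: "eq_star Db R xt m M y l \<longleftrightarrow> sys.solves_star y l" if "R \<le> y" "0 < l" for y l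
    using ratio[OF that] by (simp add: eq_star_def sys.solves_star_def)
  have two_star: "eq_2star Db R xt m M g E y l \<longleftrightarrow> sys.solves_2star y l" if "R \<le> y" "0 < l" for y l
    using that unfolding eq_2star_def sys.solves_2star_def sys.energy_def
    by (simp add: int_out_eq_Z_out rint_out_eq_N_out)
  show ?thesis
    by (simp only: order_refl ratio star two_star cong: conj_cong) (rule sys.reduced_system_solutions)
qed

end
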